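(* Let $N\ge 2$, $n\ge1$. Let $\{\mathcal{G}_k : k\in\mathcal{P}\}$, $\mathcal{P}=\{1,\ldots,Q\}$, be a finite family of weighted digraphs on the node set $\{1,\ldots,N\}$ with weights $a^k_{ij}\ge0$, $a^k_{ii}=0$, and let $\sigma:[0,\infty)\to\mathcal{P}$ be a right-continuous, piecewise constant switching signal whose consecutive switching instants are separated by at least a dwell time $T_{\min}>0$. Assume there exists $T>0$ such that for every $t_0\ge0$ the union graph $\bigcup_{t\in[t_0,t_0+T)}\mathcal{G}_{\sigma(t)}$ contains a directed spanning tree. Let $f:\mathbb{R}^n\to\mathbb{R}^n$ be continuous, $\Gamma$ a positive definite diagonal $n\times n$ matrix, and suppose there exist positive definite diagonal matrices $Q=\mathrm{diag}\{q^1,\ldots,q^n\}$ and $\Sigma=\mathrm{diag}\{\delta^1,\ldots,\delta^n\}$ such that for all $x,y\in\mathbb{R}^n$, $$(x-y)^{\mathrm{T}}Q\big(f(x)-f(y)-\Sigma x+\Sigma y\big)\ge 0.$$ Consider, for a coupling strength $\phi>0$, $$\dot{x}_i=f(x_i)+\phi\sum_{j=1}^N a_{ij}^{\sigma(t)}\Gamma(x_j-x_i),\qquad i=1,\ldots,N.$$ Then synchronization cannot be reached if $\phi$ is sufficiently small: there exists $\phi_*>0$ such that for every $\phi\in(0,\phi_* )$ the system does not achieve synchronization (i.e., it is not true that $\lim_{t\to\infty}\|x_i(t)-x_j(t)\|=0$ for all $i,j$ and all initial conditions).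
   Context: For a weighted digraph with weights $a_{ij}\ge0$, $a_{ij}>0$ means that $(j,i)$ is an edge (information flows from $j$ to $i$). A directed path is a sequence of edges $(i_1,i_2),(i_2,i_3),\ldots,(i_{q-1},i_q)$. A digraph contains a directed spanning tree if some node has a directed path to every other node. The union of a family of graphs on the same node set has as edge set the union of their edge sets. *)

theory Defs
  imports "HOL-Analysis.Analysis"
begin

definition diag_mat :: "real ^ 'n \<Rightarrow> real ^ 'n ^ 'n" where
  "diag_mat v = (\<chi> i j. if i = j then v $ i else 0)"

definition switching_signal :: "nat \<Rightarrow> real \<Rightarrow> (real \<Rightarrow> nat) \<Rightarrow> bool" where
  "switching_signal Qm Tmin \<sigma> \<longleftrightarrow>
     (\<forall>t\<ge>0. \<sigma> t \<in> {1..Qm}) \<and>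
     (\<exists>\<tau>::nat \<Rightarrow> real. \<tau> 0 = 0 \<and> (\<forall>m. \<tau> (Suc m) - \<tau> m \<ge> Tmin) \<and>
        (\<forall>m. \<forall>t. \<tau> m \<le> t \<and> t < \<tau> (Suc m) \<longrightarrow> \<sigma> t = \<sigma> (\<tau> m)))"

definition union_edges ::
  "nat \<Rightarrow> (nat \<Rightarrow> nat \<Rightarrow> nat \<Rightarrow> real) \<Rightarrow> (real \<Rightarrow> nat) \<Rightarrow> real \<Rightarrow> real \<Rightarrow> (nat \<times> nat) set" where
  "union_edges N a \<sigma> t0 T =
     {(j, i). j \<in> {1..N} \<and> i \<in> {1..N} \<and> (\<exists>t. t0 \<le> t \<and> t < t0 + T \<and> a (\<sigma> t) i j > 0)}"

text \<open>A digraph on nodes {1..N} contains a directed spanning tree iff some node has a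
  directed path to every other node.\<close>
definition has_spanning_tree :: "nat \<Rightarrow> (nat \<times> nat) set \<Rightarrow> bool" where
  "has_spanning_tree N E \<longleftrightarrow> (\<exists>r\<in>{1..N}. \<forall>i\<in>{1..N}. i \<noteq> r \<longrightarrow> (r, i) \<in> E\<^sup>+)"

text \<open>x : node \<Rightarrow> time \<Rightarrow> state is a solution on [0,\<infinity>) of
  x_i' = f(x_i) + phi * sum_j a^{sigma t}_{ij} Gamma (x_j - x_i), i = 1..N
  (continuous, with right derivative given by the right-hand side; sigma is right-continuous).\<close>
definition is_solution ::
  "nat \<Rightarrow> (nat \<Rightarrow> nat \<Rightarrow> nat \<Rightarrow> real) \<Rightarrow> (real \<Rightarrow> nat) \<Rightarrow> (real ^ 'n \<Rightarrow> real ^ 'n)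
    \<Rightarrow> real ^ 'n ^ 'n \<Rightarrow> real \<Rightarrow> (nat \<Rightarrow> real \<Rightarrow> real ^ 'n) \<Rightarrow> bool" where
  "is_solution N a \<sigma> f \<Gamma> \<phi> x \<longleftrightarrow>
     (\<forall>i\<in>{1..N}. continuous_on {0..} (x i) \<and>
        (\<forall>t\<ge>0. (x i has_vector_derivative
            (f (x i t) + \<phi> *\<^sub>R (\<Sum>j\<in>{1..N}. a (\<sigma> t) i j *\<^sub>R (\<Gamma> *v (x j t - x i t)))))
          (at t within {t..})))"

definition achieves_sync ::
  "nat \<Rightarrow> (nat \<Rightarrow> nat \<Rightarrow> nat \<Rightarrow> real) \<Rightarrow> (real \<Rightarrow> nat) \<Rightarrow> (real ^ 'n \<Rightarrow> real ^ 'n)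
    \<Rightarrow> real ^ 'n ^ 'n \<Rightarrow> real \<Rightarrow> bool" where
  "achieves_sync N a \<sigma> f \<Gamma> \<phi> \<longleftrightarrow>
     (\<forall>x0 :: nat \<Rightarrow> real ^ 'n. \<exists>x. is_solution N a \<sigma> f \<Gamma> \<phi> x \<and> (\<forall>i\<in>{1..N}. x i 0 = x0 i)) \<and>
     (\<forall>x. is_solution N a \<sigma> f \<Gamma> \<phi> x \<longrightarrow>
        (\<forall>i\<in>{1..N}. \<forall>j\<in>{1..N}. ((\<lambda>t. norm (x i t - x j t)) \<longlongrightarrow> 0) at_top))"

end

theory Submission
  imports Defs
begin

text \<open>The weighted disagreement \<open>V = (\<Sum>i j. (x\<^sub>i - x\<^sub>j)\<^sup>T Q (x\<^sub>i - x\<^sub>j))\<close> is nondecreasing along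
  every solution once \<open>\<phi>\<close> is small: the QUAD condition makes the uncoupled dynamics expand \<open>V\<close>
  at rate at least \<open>2 min\<^sub>k \<delta>\<^sup>k V\<close>, whereas the diffusive coupling can shrink it at rate at most
  \<open>4 \<phi> N max a max \<gamma> V\<close>, uniformly in the switching. Starting from two distinct states, \<open>V\<close> thus
  stays bounded away from zero.\<close>

lemma right_DERIV_pos_imp_increasing:
  fixes g :: "real \<Rightarrow> real"
  assumes ab: "a \<le> b" and cont: "continuous_on {a..b} g"
    and der: "\<And>t. a \<le> t \<Longrightarrow> t < b \<Longrightarrow> \<exists>l>0. (g has_real_derivative l) (at t within {t..})"
  shows "g a \<le> g b"
proof (rule ccontr)
  assume "\<not> g a \<le> g b"
  define S where "S = {t \<in> {a..b}. g a \<le> g t}"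
  have "closed S"
    unfolding S_def by (rule continuous_on_closed_Collect_le[OF continuous_on_const cont]) auto
  moreover have "a \<in> S" using ab by (auto simp: S_def)
  moreover have bdd: "bdd_above S" unfolding S_def by (auto intro: bdd_aboveI[of _ b])
  ultimately have "Sup S \<in> S" by (intro closed_contains_Sup) auto
  define s where "s = Sup S"
  have s: "a \<le> s" "s < b" "g a \<le> g s"
    using \<open>Sup S \<in> S\<close> \<open>\<not> g a \<le> g b\<close> by (auto simp: S_def s_def less_le)
  then obtain l where "l > 0" "(g has_real_derivative l) (at s within {s..})" using der by blast
  then obtain d where d: "d > 0" "\<And>h. h > 0 \<Longrightarrow> h < d \<Longrightarrow> g s < g (s + h)"
    using has_real_derivative_pos_inc_right by fastforce
  define h where "h = min (d / 2) (b - s)"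
  have "h > 0" "h < d" "s + h \<le> b" using d s by (auto simp: h_def)
  with d s have "s + h \<in> S" by (force simp: S_def)
  hence "s + h \<le> s" unfolding s_def using bdd by (rule cSup_upper)
  with \<open>h > 0\<close> show False by simp
qed

lemma right_DERIV_nonneg_imp_increasing:
  fixes g g' :: "real \<Rightarrow> real"
  assumes ab: "a \<le> b" and cont: "continuous_on {a..b} g"
    and der: "\<And>t. a \<le> t \<Longrightarrow> t < b \<Longrightarrow> (g has_real_derivative g' t) (at t within {t..})"
    and nonneg: "\<And>t. a \<le> t \<Longrightarrow> t < b \<Longrightarrow> 0 \<le> g' t"
  shows "g a \<le> g b"
proof -
  have perturbed: "g a \<le> g b + e * (b - a)" if "e > 0" for e
  proof -
    have "continuous_on {a..b} (\<lambda>t. g t + e * (t - a))" using cont by (intro continuous_intros)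
    moreover have "\<exists>l>0. ((\<lambda>t. g t + e * (t - a)) has_real_derivative l) (at t within {t..})"
      if "a \<le> t" "t < b" for t
    proof (intro exI conjI)
      show "((\<lambda>t. g t + e * (t - a)) has_real_derivative g' t + e) (at t within {t..})"
        using der[OF that] by (auto intro!: derivative_eq_intros)
      show "0 < g' t + e" using nonneg[OF that] \<open>e > 0\<close> by simp
    qed
    ultimately show ?thesis
      using right_DERIV_pos_imp_increasing[OF ab, of "\<lambda>t. g t + e * (t - a)"] by simp
  qed
  show ?thesis
  proof (cases "a = b")
    case False
    with ab have "b - a > 0" by simp
    show ?thesis
    proof (rule field_le_epsilon)
      fix e :: real assume "e > 0"
      with perturbed[of "e / (b - a)"] \<open>b - a > 0\<close> show "g a \<le> g b + e" by simp
    qed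
  qed simp
qed

definition weighted_inner :: "real ^ 'n \<Rightarrow> real ^ 'n \<Rightarrow> real ^ 'n \<Rightarrow> real" where
  "weighted_inner q u v = (\<Sum>k\<in>UNIV. q $ k * u $ k * v $ k)"

lemma diag_mat_mult_vec_nth [simp]: "(diag_mat v *v w) $ k = v $ k * w $ k"
  by (simp add: diag_mat_def matrix_vector_mult_def if_distrib[of "\<lambda>x. x * _"] cong: if_cong)

lemma inner_diag_mat_eq_weighted_inner: "u \<bullet> (diag_mat q *v v) = weighted_inner q u v"
  by (simp add: inner_vec_def weighted_inner_def algebra_simps)

lemma weighted_inner_add_right: "weighted_inner q u (v + w) = weighted_inner q u v + weighted_inner q u w"
  by (simp add: weighted_inner_def algebra_simps sum.distrib)

lemma weighted_inner_diff_right: "weighted_inner q u (v - w) = weighted_inner q u v - weighted_inner q u w"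
  by (simp add: weighted_inner_def algebra_simps sum_subtractf)

lemma weighted_inner_diff_left: "weighted_inner q (u - v) w = weighted_inner q u w - weighted_inner q v w"
  by (simp add: weighted_inner_def algebra_simps sum_subtractf)

lemma weighted_inner_scaleR_right: "weighted_inner q u (c *\<^sub>R v) = c * weighted_inner q u v"
  by (simp add: weighted_inner_def sum_distrib_left algebra_simps)

lemma weighted_inner_sum_right: "weighted_inner q u (\<Sum>l\<in>L. v l) = (\<Sum>l\<in>L. weighted_inner q u (v l))"
  by (simp add: weighted_inner_def sum_distrib_left sum_distrib_right sum.swap[of _ UNIV] algebra_simps)

lemma weighted_inner_self_nonneg: "(\<And>k. 0 \<le> q $ k) \<Longrightarrow> 0 \<le> weighted_inner q u u"
  by (simp add: weighted_inner_def mult.assoc sum_nonneg)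

lemma weighted_inner_self_pos:
  assumes "\<And>k. 0 < q $ k" and "u \<noteq> 0"
  shows "0 < weighted_inner q u u"
proof -
  obtain k where "u $ k \<noteq> 0" using \<open>u \<noteq> 0\<close> by (auto simp: vec_eq_iff)
  with assms(1)[of k] have "0 < q $ k * u $ k * u $ k"
    by (auto simp: mult.assoc zero_less_mult_iff linorder_neq_iff)
  moreover have "0 \<le> q $ k' * u $ k' * u $ k'" for k'
    using assms(1)[of k'] by (simp add: mult.assoc less_imp_le)
  ultimately show ?thesis unfolding weighted_inner_def by (intro sum_pos2) auto
qed

lemma weighted_inner_has_real_derivative_self:
  assumes "(u has_vector_derivative u') (at t within S)"
  shows "((\<lambda>t. weighted_inner q (u t) (u t)) has_real_derivative 2 * weighted_inner q (u t) u')
    (at t within S)"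
proof -
  have nth: "((\<lambda>t. u t $ k) has_real_derivative u' $ k) (at t within S)" for k
    using bounded_linear.has_vector_derivative[OF bounded_linear_vec_nth assms]
    by (simp add: has_real_derivative_iff_has_vector_derivative)
  have "((\<lambda>t. u t $ k * u t $ k) has_real_derivative u t $ k * u' $ k + u' $ k * u t $ k)
      (at t within S)" for k
    by (intro DERIV_mult' nth)
  then have "((\<lambda>t. weighted_inner q (u t) (u t)) has_real_derivative
      (\<Sum>k\<in>UNIV. q $ k * (u t $ k * u' $ k + u' $ k * u t $ k))) (at t within S)"
    unfolding weighted_inner_def mult.assoc by (intro DERIV_sum DERIV_cmult)
  then show ?thesis by (simp add: weighted_inner_def sum_distrib_left algebra_simps)
qed

lemma abs_weighted_inner_diag_mat_le:
  assumes q: "\<And>k. 0 \<le> q $ k" and \<gamma>: "\<And>k. 0 \<le> \<gamma> $ k \<and> \<gamma> $ k \<le> g"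
  shows "\<bar>weighted_inner q u (diag_mat \<gamma> *v w)\<bar> \<le> g / 2 * (weighted_inner q u u + weighted_inner q w w)"
proof -
  have "0 \<le> g" using \<gamma> order_trans by blast
  have component: "\<bar>q $ k * u $ k * (\<gamma> $ k * w $ k)\<bar> \<le> g / 2 * (q $ k * u $ k * u $ k + q $ k * w $ k * w $ k)" for k
  proof -
    have am_gm: "\<bar>u $ k\<bar> * \<bar>w $ k\<bar> \<le> (u $ k * u $ k + w $ k * w $ k) / 2"
      using sum_squares_bound[of "\<bar>u $ k\<bar>" "\<bar>w $ k\<bar>"]
      unfolding power2_eq_square by (simp add: abs_mult_self_eq mult_ac)
    have "\<bar>q $ k * u $ k * (\<gamma> $ k * w $ k)\<bar> = q $ k * \<gamma> $ k * (\<bar>u $ k\<bar> * \<bar>w $ k\<bar>)"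
      using q \<gamma> by (simp add: abs_mult)
    also have "\<dots> \<le> q $ k * g * ((u $ k * u $ k + w $ k * w $ k) / 2)"
      using q \<gamma> am_gm \<open>0 \<le> g\<close> by (intro mult_mono) auto
    finally show ?thesis by (simp add: algebra_simps)
  qed
  have "\<bar>weighted_inner q u (diag_mat \<gamma> *v w)\<bar>
      \<le> (\<Sum>k\<in>UNIV. g / 2 * (q $ k * u $ k * u $ k + q $ k * w $ k * w $ k))"
    unfolding weighted_inner_def diag_mat_mult_vec_nth
    by (intro order_trans[OF sum_abs] sum_mono component)
  then show ?thesis by (simp add: weighted_inner_def flip: sum_divide_distrib sum_distrib_left sum.distrib)
qed

definition disagreement :: "real ^ 'n \<Rightarrow> nat set \<Rightarrow> (nat \<Rightarrow> real ^ 'n) \<Rightarrow> real" where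
  "disagreement q I y = (\<Sum>i\<in>I. \<Sum>j\<in>I. weighted_inner q (y i - y j) (y i - y j))"

definition diffusive_coupling ::
  "(nat \<Rightarrow> nat \<Rightarrow> real) \<Rightarrow> real ^ 'n ^ 'n \<Rightarrow> nat set \<Rightarrow> (nat \<Rightarrow> real ^ 'n) \<Rightarrow> nat
    \<Rightarrow> real ^ 'n" where
  "diffusive_coupling A \<Gamma> I y i = (\<Sum>l\<in>I. A i l *\<^sub>R (\<Gamma> *v (y l - y i)))"

lemma disagreement_nonneg: "(\<And>k. 0 \<le> q $ k) \<Longrightarrow> 0 \<le> disagreement q I y"
  unfolding disagreement_def by (intro sum_nonneg weighted_inner_self_nonneg)

lemma disagreement_pos:
  assumes q: "\<And>k. 0 < q $ k" and "finite I" "i \<in> I" "j \<in> I" "y i \<noteq> y j"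
  shows "0 < disagreement q I y"
proof -
  have nonneg: "0 \<le> weighted_inner q (y i' - y j') (y i' - y j')" for i' j'
    using q by (intro weighted_inner_self_nonneg less_imp_le)
  have "0 < weighted_inner q (y i - y j) (y i - y j)"
    using q \<open>y i \<noteq> y j\<close> by (intro weighted_inner_self_pos) auto
  then have "0 < (\<Sum>j'\<in>I. weighted_inner q (y i - y j') (y i - y j'))"
    by (rule sum_pos2[OF \<open>finite I\<close> \<open>j \<in> I\<close>]) (auto intro: nonneg)
  then show ?thesis
    unfolding disagreement_def by (rule sum_pos2[OF \<open>finite I\<close> \<open>i \<in> I\<close>]) (auto intro: sum_nonneg nonneg)
qed

lemma has_real_derivative_disagreement:
  assumes "\<And>i. i \<in> I \<Longrightarrow> (x i has_vector_derivative v i) (at t within S)"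
  shows "((\<lambda>t. disagreement q I (\<lambda>i. x i t)) has_real_derivative
      2 * (\<Sum>i\<in>I. \<Sum>j\<in>I. weighted_inner q (x i t - x j t) (v i - v j))) (at t within S)"
  unfolding disagreement_def sum_distrib_left
  by (intro DERIV_sum weighted_inner_has_real_derivative_self has_vector_derivative_diff assms)

lemma sum_pairs_weighted_inner_antisym:
  assumes "finite I"
  shows "(\<Sum>i\<in>I. \<Sum>j\<in>I. weighted_inner q (y i - y j) (c i - c j))
    = 2 * (\<Sum>i\<in>I. \<Sum>j\<in>I. weighted_inner q (y i - y j) (c i))"
proof -
  have "(\<Sum>i\<in>I. \<Sum>j\<in>I. weighted_inner q (y i - y j) (c j))
      = (\<Sum>j\<in>I. \<Sum>i\<in>I. weighted_inner q (y i - y j) (c j))"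
    by (rule sum.swap)
  also have "\<dots> = - (\<Sum>i\<in>I. \<Sum>j\<in>I. weighted_inner q (y i - y j) (c i))"
    by (simp add: weighted_inner_diff_left sum_subtractf sum_negf[symmetric])
  finally show ?thesis
    by (simp add: weighted_inner_diff_right sum_subtractf)
qed

lemma abs_sum_pairs_coupling_le:
  assumes "finite I" and q: "\<And>k. 0 \<le> q $ k" and \<gamma>: "\<And>k. 0 \<le> \<gamma> $ k \<and> \<gamma> $ k \<le> g"
    and A: "\<And>i l. i \<in> I \<Longrightarrow> l \<in> I \<Longrightarrow> 0 \<le> A i l \<and> A i l \<le> Am"
  shows "\<bar>\<Sum>i\<in>I. \<Sum>j\<in>I. weighted_inner q (y i - y j) (diffusive_coupling A (diag_mat \<gamma>) I y i)\<bar>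
    \<le> Am * g * card I * disagreement q I y"
proof -
  define d where "d i j = weighted_inner q (y i - y j) (y i - y j)" for i j
  have term_le: "\<bar>A i l * weighted_inner q (y i - y j) (diag_mat \<gamma> *v (y l - y i))\<bar>
      \<le> Am * (g / 2 * (d i j + d l i))" if "i \<in> I" "l \<in> I" for i j l
    unfolding abs_mult d_def using A[OF that] q \<gamma>
    by (intro mult_mono abs_weighted_inner_diag_mat_le add_nonneg_nonneg weighted_inner_self_nonneg
        mult_nonneg_nonneg) (auto intro: order_trans)
  have "\<bar>\<Sum>i\<in>I. \<Sum>j\<in>I. weighted_inner q (y i - y j) (diffusive_coupling A (diag_mat \<gamma>) I y i)\<bar>
      = \<bar>\<Sum>i\<in>I. \<Sum>j\<in>I. \<Sum>l\<in>I. A i l * weighted_inner q (y i - y j) (diag_mat \<gamma> *v (y l - y i))\<bar>"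
    by (simp add: diffusive_coupling_def weighted_inner_sum_right weighted_inner_scaleR_right)
  also have "\<dots> \<le> (\<Sum>i\<in>I. \<Sum>j\<in>I. \<Sum>l\<in>I. Am * (g / 2 * (d i j + d l i)))"
    using term_le by (intro order_trans[OF sum_abs] sum_mono) auto
  also have "\<dots> = Am * g / 2 * ((\<Sum>i\<in>I. \<Sum>j\<in>I. \<Sum>l\<in>I. d i j) + (\<Sum>i\<in>I. \<Sum>j\<in>I. \<Sum>l\<in>I. d l i))"
    by (simp add: sum_distrib_left sum.distrib algebra_simps)
  also have "(\<Sum>i\<in>I. \<Sum>j\<in>I. \<Sum>l\<in>I. d l i) = card I * (\<Sum>i\<in>I. \<Sum>l\<in>I. d l i)"
    by (simp add: sum_distrib_left)
  also have "(\<Sum>i\<in>I. \<Sum>l\<in>I. d l i) = (\<Sum>l\<in>I. \<Sum>i\<in>I. d l i)"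
    by (rule sum.swap)
  also have "(\<Sum>l\<in>I. \<Sum>i\<in>I. d l i) = disagreement q I y"
    by (simp add: disagreement_def d_def)
  also have "(\<Sum>i\<in>I. \<Sum>j\<in>I. \<Sum>l\<in>I. d i j) = card I * disagreement q I y"
    by (simp add: disagreement_def d_def sum_distrib_left)
  finally show ?thesis by (simp add: algebra_simps)
qed

lemma quad_condition_imp_weighted_inner_ge:
  assumes QUAD: "\<And>x y. (x - y) \<bullet> (diag_mat q *v (f x - f y - diag_mat \<delta> *v x + diag_mat \<delta> *v y)) \<ge> 0"
    and q: "\<And>k. 0 \<le> q $ k" and dm: "\<And>k. dm \<le> \<delta> $ k"
  shows "dm * weighted_inner q (x - y) (x - y) \<le> weighted_inner q (x - y) (f x - f y)"
proof -
  have "dm * weighted_inner q (x - y) (x - y) \<le> weighted_inner q (x - y) (diag_mat \<delta> *v (x - y))"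
    unfolding weighted_inner_def sum_distrib_left diag_mat_mult_vec_nth
  proof (rule sum_mono)
    fix k
    have "0 \<le> q $ k * (x - y) $ k * (x - y) $ k" using q[of k] by (simp add: mult.assoc)
    with dm[of k] have "dm * (q $ k * (x - y) $ k * (x - y) $ k) \<le> \<delta> $ k * (q $ k * (x - y) $ k * (x - y) $ k)"
      by (rule mult_right_mono)
    then show "dm * (q $ k * (x - y) $ k * (x - y) $ k) \<le> q $ k * (x - y) $ k * (\<delta> $ k * (x - y) $ k)"
      by (simp add: mult_ac)
  qed
  also have "\<dots> \<le> weighted_inner q (x - y) (f x - f y)"
    using QUAD[of x y]
    by (simp add: inner_diag_mat_eq_weighted_inner weighted_inner_diff_right weighted_inner_add_right
        matrix_vector_mult_diff_distrib)
  finally show ?thesis .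
qed

lemma disagreement_rate_nonneg:
  fixes y :: "nat \<Rightarrow> real ^ 'n" and f :: "real ^ 'n \<Rightarrow> real ^ 'n" and \<phi> :: real
  assumes "finite I" and q: "\<And>k. 0 \<le> q $ k" and \<gamma>: "\<And>k. 0 \<le> \<gamma> $ k \<and> \<gamma> $ k \<le> g"
    and dm: "\<And>k. dm \<le> \<delta> $ k" and A: "\<And>i l. i \<in> I \<Longrightarrow> l \<in> I \<Longrightarrow> 0 \<le> A i l \<and> A i l \<le> Am"
    and QUAD: "\<And>x y. (x - y) \<bullet> (diag_mat q *v (f x - f y - diag_mat \<delta> *v x + diag_mat \<delta> *v y)) \<ge> 0"
    and \<phi>: "0 \<le> \<phi>" "2 * \<phi> * Am * g * card I \<le> dm"
  shows "0 \<le> (\<Sum>i\<in>I. \<Sum>j\<in>I. weighted_inner q (y i - y j)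
    ((f (y i) + \<phi> *\<^sub>R diffusive_coupling A (diag_mat \<gamma>) I y i)
      - (f (y j) + \<phi> *\<^sub>R diffusive_coupling A (diag_mat \<gamma>) I y j)))"
proof -
  define c where "c = diffusive_coupling A (diag_mat \<gamma>) I y"
  define V where "V = disagreement q I y"
  define S where "S = (\<Sum>i\<in>I. \<Sum>j\<in>I. weighted_inner q (y i - y j) (c i))"
  have "weighted_inner q (y i - y j) ((f (y i) + \<phi> *\<^sub>R c i) - (f (y j) + \<phi> *\<^sub>R c j))
      = weighted_inner q (y i - y j) (f (y i) - f (y j)) + \<phi> * weighted_inner q (y i - y j) (c i - c j)"
    for i j by (simp add: weighted_inner_diff_right weighted_inner_add_right weighted_inner_scaleR_right
        right_diff_distrib)
  then have "(\<Sum>i\<in>I. \<Sum>j\<in>I. weighted_inner q (y i - y j) ((f (y i) + \<phi> *\<^sub>R c i) - (f (y j) + \<phi> *\<^sub>R c j)))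
      = (\<Sum>i\<in>I. \<Sum>j\<in>I. weighted_inner q (y i - y j) (f (y i) - f (y j)))
        + \<phi> * (\<Sum>i\<in>I. \<Sum>j\<in>I. weighted_inner q (y i - y j) (c i - c j))"
    by (simp add: sum.distrib sum_distrib_left)
  also have "\<dots> = (\<Sum>i\<in>I. \<Sum>j\<in>I. weighted_inner q (y i - y j) (f (y i) - f (y j))) + \<phi> * (2 * S)"
    unfolding S_def sum_pairs_weighted_inner_antisym[OF \<open>finite I\<close>] ..
  finally have split: "(\<Sum>i\<in>I. \<Sum>j\<in>I. weighted_inner q (y i - y j) ((f (y i) + \<phi> *\<^sub>R c i) - (f (y j) + \<phi> *\<^sub>R c j)))
      = (\<Sum>i\<in>I. \<Sum>j\<in>I. weighted_inner q (y i - y j) (f (y i) - f (y j))) + \<phi> * (2 * S)" .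
  have "dm * V \<le> (\<Sum>i\<in>I. \<Sum>j\<in>I. weighted_inner q (y i - y j) (f (y i) - f (y j)))"
    unfolding V_def disagreement_def sum_distrib_left
    using QUAD q dm by (intro sum_mono quad_condition_imp_weighted_inner_ge)
  moreover have "\<bar>S\<bar> \<le> Am * g * card I * V"
    unfolding S_def V_def c_def using \<open>finite I\<close> q \<gamma> A by (rule abs_sum_pairs_coupling_le)
  then have "2 * \<phi> * (- S) \<le> 2 * \<phi> * (Am * g * card I * V)"
    using \<phi>(1) by (intro mult_left_mono) (auto simp: abs_le_iff)
  then have "- (2 * \<phi> * Am * g * card I * V) \<le> \<phi> * (2 * S)" by (simp add: algebra_simps)
  moreover have "2 * \<phi> * Am * g * card I * V \<le> dm * V"
    using \<phi>(2) disagreement_nonneg[OF q] unfolding V_def by (rule mult_right_mono)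
  ultimately show ?thesis unfolding c_def[symmetric] split by linarith
qed

lemma tendsto_disagreement_zero:
  assumes "\<And>i j. i \<in> I \<Longrightarrow> j \<in> I \<Longrightarrow> ((\<lambda>t. norm (x i t - x j t)) \<longlongrightarrow> 0) F"
  shows "((\<lambda>t. disagreement q I (\<lambda>i. x i t)) \<longlongrightarrow> 0) F"
  unfolding disagreement_def
proof (intro tendsto_null_sum)
  fix i j assume "i \<in> I" "j \<in> I"
  then have "((\<lambda>t. x i t - x j t) \<longlongrightarrow> 0) F"
    using assms tendsto_norm_zero_iff by blast
  then have "((\<lambda>t. weighted_inner q (x i t - x j t) (x i t - x j t))
      \<longlongrightarrow> weighted_inner q 0 0) F"
    unfolding weighted_inner_def by (intro tendsto_intros)
  then show "((\<lambda>t. weighted_inner q (x i t - x j t) (x i t - x j t)) \<longlongrightarrow> 0) F"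
    by (simp add: weighted_inner_def)
qed

lemma disagreement_increasing_along_solution:
  fixes x :: "nat \<Rightarrow> real \<Rightarrow> real ^ 'n" and \<phi> :: real
  assumes sol: "is_solution N a \<sigma> f (diag_mat \<gamma>) \<phi> x"
    and a: "\<And>t i j. 0 \<le> t \<Longrightarrow> i \<in> {1..N} \<Longrightarrow> j \<in> {1..N} \<Longrightarrow> 0 \<le> a (\<sigma> t) i j \<and> a (\<sigma> t) i j \<le> Am"
    and q: "\<And>k. 0 \<le> q $ k" and \<gamma>: "\<And>k. 0 \<le> \<gamma> $ k \<and> \<gamma> $ k \<le> g" and dm: "\<And>k. dm \<le> \<delta> $ k"
    and QUAD: "\<And>x y. (x - y) \<bullet> (diag_mat q *v (f x - f y - diag_mat \<delta> *v x + diag_mat \<delta> *v y)) \<ge> 0"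
    and \<phi>: "0 \<le> \<phi>" "2 * \<phi> * Am * g * N \<le> dm"
    and "0 \<le> t"
  shows "disagreement q {1..N} (\<lambda>i. x i 0) \<le> disagreement q {1..N} (\<lambda>i. x i t)"
proof (rule right_DERIV_nonneg_imp_increasing[OF \<open>0 \<le> t\<close>])
  have "continuous_on {0..t} (x i)" if "i \<in> {1..N}" for i
    using sol that continuous_on_subset[of "{0..}" "x i" "{0..t}"] unfolding is_solution_def by auto
  then show "continuous_on {0..t} (\<lambda>t. disagreement q {1..N} (\<lambda>i. x i t))"
    unfolding disagreement_def weighted_inner_def by (intro continuous_intros) auto
next
  fix s :: real assume "0 \<le> s" "s < t"
  let ?v = "\<lambda>i. f (x i s) + \<phi> *\<^sub>R diffusive_coupling (a (\<sigma> s)) (diag_mat \<gamma>) {1..N} (\<lambda>j. x j s) i"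
  have "(x i has_vector_derivative ?v i) (at s within {s..})" if "i \<in> {1..N}" for i
    using sol that \<open>0 \<le> s\<close> unfolding is_solution_def diffusive_coupling_def by blast
  then show "((\<lambda>t. disagreement q {1..N} (\<lambda>i. x i t)) has_real_derivative
      2 * (\<Sum>i\<in>{1..N}. \<Sum>j\<in>{1..N}. weighted_inner q (x i s - x j s) (?v i - ?v j))) (at s within {s..})"
    by (rule has_real_derivative_disagreement)
  have "0 \<le> (\<Sum>i\<in>{1..N}. \<Sum>j\<in>{1..N}. weighted_inner q (x i s - x j s) (?v i - ?v j))"
    using q \<gamma> dm a[OF \<open>0 \<le> s\<close>] QUAD \<phi> by (intro disagreement_rate_nonneg) auto
  then show "0 \<le> 2 * (\<Sum>i\<in>{1..N}. \<Sum>j\<in>{1..N}. weighted_inner q (x i s - x j s) (?v i - ?v j))"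
    by simp
qed

lemma small_coupling_not_achieves_sync:
  fixes \<phi> :: real and f :: "real ^ 'n \<Rightarrow> real ^ 'n"
  assumes "N \<ge> 2"
    and a: "\<And>t i j. 0 \<le> t \<Longrightarrow> i \<in> {1..N} \<Longrightarrow> j \<in> {1..N} \<Longrightarrow> 0 \<le> a (\<sigma> t) i j \<and> a (\<sigma> t) i j \<le> Am"
    and q: "\<And>k. 0 < q $ k" and \<gamma>: "\<And>k. 0 \<le> \<gamma> $ k \<and> \<gamma> $ k \<le> g" and dm: "\<And>k. dm \<le> \<delta> $ k"
    and QUAD: "\<And>x y. (x - y) \<bullet> (diag_mat q *v (f x - f y - diag_mat \<delta> *v x + diag_mat \<delta> *v y)) \<ge> 0"
    and \<phi>: "0 \<le> \<phi>" "2 * \<phi> * Am * g * N \<le> dm"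
  shows "\<not> achieves_sync N a \<sigma> f (diag_mat \<gamma>) \<phi>"
proof
  assume sync: "achieves_sync N a \<sigma> f (diag_mat \<gamma>) \<phi>"
  obtain x where sol: "is_solution N a \<sigma> f (diag_mat \<gamma>) \<phi> x"
    and init: "\<And>i. i \<in> {1..N} \<Longrightarrow> x i 0 = (if i = 1 then 1 else 0)"
    using sync[unfolded achieves_sync_def, THEN conjunct1, rule_format, of "\<lambda>i. if i = 1 then 1 else 0"]
    by auto
  define V where "V t = disagreement q {1..N} (\<lambda>i. x i t)" for t
  have "0 < V 0"
    unfolding V_def using q init \<open>N \<ge> 2\<close> by (intro disagreement_pos[of q _ 1 2]) auto
  moreover have "(V \<longlongrightarrow> 0) at_top"
    unfolding V_def using sync sol by (intro tendsto_disagreement_zero) (auto simp: achieves_sync_def)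
  moreover have "V 0 \<le> V t" if "0 \<le> t" for t
    unfolding V_def using sol a q \<gamma> dm QUAD \<phi> that
    by (intro disagreement_increasing_along_solution) (auto intro: less_imp_le)
  ultimately show False
    using tendsto_lowerbound[of V 0 at_top "V 0"] by (auto simp: eventually_at_top_linorder)
qed

lemma finite_imp_pos_upper_bound:
  fixes h :: "'a \<Rightarrow> real"
  assumes "finite A"
  obtains B where "B > 0" "\<And>x. x \<in> A \<Longrightarrow> h x \<le> B"
  using assms by (intro that[of "Max (insert 1 (h ` A))"]) (auto simp: Max_ge_iff Max_gr_iff)

lemma finite_imp_pos_lower_bound:
  fixes h :: "'a \<Rightarrow> real"
  assumes "finite A" and "\<And>x. x \<in> A \<Longrightarrow> 0 < h x"
  obtains b where "b > 0" "\<And>x. x \<in> A \<Longrightarrow> b \<le> h x"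
  using assms by (intro that[of "Min (insert 1 (h ` A))"]) (auto simp: Min_le_iff Min_gr_iff)

theorem theorem6:
  fixes N Qm :: nat and a :: "nat \<Rightarrow> nat \<Rightarrow> nat \<Rightarrow> real" and \<sigma> :: "real \<Rightarrow> nat"
    and Tmin T :: real and f :: "real ^ 'n \<Rightarrow> real ^ 'n"
    and \<gamma> q \<delta> :: "real ^ 'n"
  assumes N2: "N \<ge> 2"
    and Qm: "Qm \<ge> 1"
    and a_nonneg: "\<And>k i j. k \<in> {1..Qm} \<Longrightarrow> i \<in> {1..N} \<Longrightarrow> j \<in> {1..N} \<Longrightarrow> a k i j \<ge> 0"
    and a_diag: "\<And>k i. k \<in> {1..Qm} \<Longrightarrow> i \<in> {1..N} \<Longrightarrow> a k i i = 0"
    and Tmin: "Tmin > 0"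
    and sw: "switching_signal Qm Tmin \<sigma>"
    and T: "T > 0"
    and conn: "\<And>t0. t0 \<ge> 0 \<Longrightarrow> has_spanning_tree N (union_edges N a \<sigma> t0 T)"
    and f_cont: "continuous_on UNIV f"
    and \<gamma>_pos: "\<And>k. \<gamma> $ k > 0"
    and q_pos: "\<And>k. q $ k > 0"
    and \<delta>_pos: "\<And>k. \<delta> $ k > 0"
    and QUAD: "\<And>x y. (x - y) \<bullet> (diag_mat q *v (f x - f y - diag_mat \<delta> *v x + diag_mat \<delta> *v y)) \<ge> 0"
  shows "\<exists>\<phi>s > 0. \<forall>\<phi>. 0 < \<phi> \<and> \<phi> < \<phi>s \<longrightarrow> \<not> achieves_sync N a \<sigma> f (diag_mat \<gamma>) \<phi>"
proof -
  obtain Am where "Am > 0"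
    and Am: "\<And>k i j. k \<in> {1..Qm} \<Longrightarrow> i \<in> {1..N} \<Longrightarrow> j \<in> {1..N} \<Longrightarrow> a k i j \<le> Am"
    using finite_imp_pos_upper_bound[of "{1..Qm} \<times> {1..N} \<times> {1..N}" "\<lambda>(k, i, j). a k i j"]
    by (metis (no_types, lifting) SigmaI case_prod_conv finite_SigmaI finite_atLeastAtMost)
  obtain g where "g > 0" and g: "\<And>k. \<gamma> $ k \<le> g"
    using finite_imp_pos_upper_bound[of UNIV "\<lambda>k. \<gamma> $ k"] by auto
  obtain dm where "dm > 0" and dm: "\<And>k. dm \<le> \<delta> $ k"
    using finite_imp_pos_lower_bound[of UNIV "\<lambda>k. \<delta> $ k"] \<delta>_pos by auto
  have modes: "\<sigma> t \<in> {1..Qm}" if "0 \<le> t" for t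
    using sw that unfolding switching_signal_def by blast
  define \<phi>s where "\<phi>s = dm / (2 * Am * g * N)"
  have "2 * Am * g * N > 0" using \<open>Am > 0\<close> \<open>g > 0\<close> N2 by simp
  then have small: "2 * \<phi> * Am * g * N \<le> dm" if "\<phi> < \<phi>s" for \<phi>
    using that by (simp add: \<phi>s_def pos_less_divide_eq mult_ac)
  have "\<phi>s > 0" using \<open>2 * Am * g * N > 0\<close> \<open>dm > 0\<close> by (simp add: \<phi>s_def)
  moreover have "\<not> achieves_sync N a \<sigma> f (diag_mat \<gamma>) \<phi>" if "0 < \<phi>" "\<phi> < \<phi>s" for \<phi>
    using N2 a_nonneg Am modes q_pos \<gamma>_pos g dm QUAD \<open>0 < \<phi>\<close> small[OF \<open>\<phi> < \<phi>s\<close>]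
    by (intro small_coupling_not_achieves_sync[where Am = Am and g = g and dm = dm]) (auto intro: less_imp_le)
  ultimately show ?thesis by blast
qed

end
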